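(* Let $n\ge2$ and let $(x,y,z)$ be a $C^1$ solution of \[\dot x=nx^2+z^2,\quad \dot y=(n+1)z^2,\quad \dot z=\tfrac{n+1}{n}z\big((n-1)x+y\big),\qquad (x,y,z)(0)=(x_0,y_0,z_0)\in\mathbb R^3_{>0},\] on $[0,T)$, where $T$ is the maximal time of existence. Then $T\leq\big((n+1)\min\{x_0,y_0,z_0\}\big)^{-1}<\infty$, and \[x,y,z\geq\frac{1}{\min\{x_0,y_0,z_0\}^{-1}-(n+1)t}\qquad\text{for all }t\in[0,T).\] *)

theory Defs
  imports "HOL-Analysis.Analysis" "HOL-Library.Extended_Real"
begin

definition time_dom :: "ereal \<Rightarrow> real set" where
  "time_dom T = {t. 0 \<le> t \<and> ereal t < T}"

text \<open>(x,y,z) is a C^1 solution of the ODE system on [0,T) with given initial data.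
  Derivatives are taken within [0,T) (one-sided at 0); the continuity of the derivatives
  (C^1) is included explicitly.\<close>
definition is_solution ::
  "nat \<Rightarrow> real \<Rightarrow> real \<Rightarrow> real \<Rightarrow> ereal \<Rightarrow> (real \<Rightarrow> real) \<Rightarrow> (real \<Rightarrow> real) \<Rightarrow> (real \<Rightarrow> real) \<Rightarrow> bool" where
  "is_solution n x0 y0 z0 T x y z \<longleftrightarrow>
     T > 0 \<and> x 0 = x0 \<and> y 0 = y0 \<and> z 0 = z0 \<and>
     continuous_on (time_dom T) (\<lambda>t. real n * (x t)^2 + (z t)^2) \<and>
     continuous_on (time_dom T) (\<lambda>t. (real n + 1) * (z t)^2) \<and>
     continuous_on (time_dom T) (\<lambda>t. (real n + 1) / real n * z t * ((real n - 1) * x t + y t)) \<and>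
     (\<forall>t \<in> time_dom T.
        (x has_real_derivative (real n * (x t)^2 + (z t)^2)) (at t within time_dom T) \<and>
        (y has_real_derivative ((real n + 1) * (z t)^2)) (at t within time_dom T) \<and>
        (z has_real_derivative ((real n + 1) / real n * z t * ((real n - 1) * x t + y t)))
           (at t within time_dom T))"

definition is_maximal_solution ::
  "nat \<Rightarrow> real \<Rightarrow> real \<Rightarrow> real \<Rightarrow> ereal \<Rightarrow> (real \<Rightarrow> real) \<Rightarrow> (real \<Rightarrow> real) \<Rightarrow> (real \<Rightarrow> real) \<Rightarrow> bool" where
  "is_maximal_solution n x0 y0 z0 T x y z \<longleftrightarrow>
     is_solution n x0 y0 z0 T x y z \<and>
     \<not> (\<exists>T' x' y' z'. T' > T \<and> is_solution n x0 y0 z0 T' x' y' z' \<and>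
          (\<forall>t \<in> time_dom T. x' t = x t \<and> y' t = y t \<and> z' t = z t))"

end

theory Submission
  imports Defs
begin

text \<open>If \<open>x, y, z \<ge> w \<ge> 0\<close>, every component of the vector field is at least
  \<open>(n + 1) w\<^sup>2\<close>. Hence \<open>w(t) = 1 / (m\<^sup>-\<^sup>1 - (n + 1) t)\<close>, the solution of
  \<open>w' = (n + 1) w\<^sup>2\<close>, \<open>w(0) = m = min x\<^sub>0 y\<^sub>0 z\<^sub>0\<close>, is a subsolution
  for all three components simultaneously, and a comparison argument at the first touching
  time keeps \<open>x, y, z\<close> above \<open>w\<close>. Since \<open>w\<close> blows up at \<open>t = ((n + 1) m)\<^sup>-\<^sup>1\<close>
  while a solution is continuous on every compact subinterval of \<open>[0, T)\<close>, \<open>T\<close> cannot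
  exceed that time.\<close>

lemma DERIV_less_from_left:
  fixes f g :: "real \<Rightarrow> real"
  assumes f: "(f has_real_derivative f') (at t within D)"
    and g: "(g has_real_derivative g') (at t within D)"
    and "g' < f'" and "a < t" and "{a..<t} \<subseteq> D"
    and le: "\<And>s. a \<le> s \<Longrightarrow> s < t \<Longrightarrow> g s \<le> f s"
  shows "g t < f t"
proof -
  have "((\<lambda>s. f s - g s) has_real_derivative (f' - g')) (at t within D)"
    using f g by (rule derivative_intros)
  moreover have "0 < f' - g'" using \<open>g' < f'\<close> by simp
  ultimately obtain d where "d > 0"
    and inc: "\<forall>h>0. t - h \<in> D \<longrightarrow> h < d \<longrightarrow> f (t - h) - g (t - h) < f t - g t"
    by (blast dest: has_real_derivative_pos_inc_left)
  define h where "h = min (d / 2) ((t - a) / 2)"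
  have "h > 0" "h < d" using \<open>d > 0\<close> \<open>a < t\<close> by (auto simp: h_def)
  moreover have "h \<le> (t - a) / 2" unfolding h_def by (rule min.cobounded2)
  ultimately have "a \<le> t - h" and "t - h < t" using \<open>a < t\<close> by auto
  then have "t - h \<in> D" using \<open>{a..<t} \<subseteq> D\<close> by auto
  with inc \<open>h > 0\<close> \<open>h < d\<close> have "f (t - h) - g (t - h) < f t - g t" by blast
  moreover have "g (t - h) \<le> f (t - h)" using le \<open>a \<le> t - h\<close> \<open>t - h < t\<close> by blast
  ultimately show ?thesis by linarith
qed

lemma continuous_on_le_at_right_end:
  fixes f g :: "real \<Rightarrow> real"
  assumes "continuous_on {a..b} f" "continuous_on {a..b} g" "a < b"
    and "\<And>s. a \<le> s \<Longrightarrow> s < b \<Longrightarrow> g s \<le> f s"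
  shows "g b \<le> f b"
proof -
  have "closure {a..<b} \<subseteq> {s \<in> {a..b}. g s \<le> f s}"
    using assms by (intro closure_minimal continuous_on_closed_Collect_le) auto
  moreover have "b \<in> closure {a..<b}" using \<open>a < b\<close> by simp
  ultimately show ?thesis by blast
qed

text \<open>Comparison principle for cooperative systems: at the first time some member of
  the family touches \<open>w\<close>, all members are still \<open>\<ge> w\<close>, which is exactly what the
  subsolution hypothesis needs.\<close>
lemma strict_subsolution_stays_below:
  fixes F :: "(real \<Rightarrow> real) set" and w w' :: "real \<Rightarrow> real"
  assumes "finite F"
    and cont: "\<And>f. f \<in> F \<Longrightarrow> continuous_on {0..b} f"
    and init: "\<And>f. f \<in> F \<Longrightarrow> w 0 < f 0"
    and dw: "\<And>s. s \<in> {0..b} \<Longrightarrow> (w has_real_derivative w' s) (at s within {0..b})"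
    and sub: "\<And>f s. f \<in> F \<Longrightarrow> 0 < s \<Longrightarrow> s \<le> b \<Longrightarrow> (\<And>g. g \<in> F \<Longrightarrow> w s \<le> g s) \<Longrightarrow>
        f s = w s \<Longrightarrow> \<exists>f'. (f has_real_derivative f') (at s within {0..b}) \<and> w' s < f'"
    and "f \<in> F" "0 \<le> s" "s \<le> b"
  shows "w s < f s"
proof (rule ccontr)
  define S where "S = (\<Union>g\<in>F. {r \<in> {0..b}. g r \<le> w r})"
  assume "\<not> w s < f s"
  then have "f s \<le> w s" by simp
  then have "s \<in> S" unfolding S_def using \<open>f \<in> F\<close> \<open>0 \<le> s\<close> \<open>s \<le> b\<close> by auto
  have cw: "continuous_on {0..b} w"
    unfolding continuous_on_eq_continuous_within using dw by (blast intro: DERIV_continuous)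
  have "closed S"
    unfolding S_def using \<open>finite F\<close> cont cw
    by (intro closed_UN ballI continuous_on_closed_Collect_le) auto
  moreover have "bdd_below S" unfolding S_def bdd_below_def by auto
  moreover have "S \<noteq> {}" using \<open>s \<in> S\<close> by blast
  ultimately have "Inf S \<in> S" by (intro closed_contains_Inf)
  define t where "t = Inf S"
  have "t \<in> S" using \<open>Inf S \<in> S\<close> by (simp add: t_def)
  then obtain u where u: "u \<in> F" "u t \<le> w t" and t: "0 \<le> t" "t \<le> b"
    unfolding S_def by auto
  have before: "w r < g r" if "g \<in> F" "0 \<le> r" "r < t" for g r
  proof -
    have "r \<notin> S"
      using cInf_lower[OF _ \<open>bdd_below S\<close>, of r] \<open>r < t\<close> unfolding t_def by linarith
    with that t show ?thesis unfolding S_def by force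
  qed
  have "0 < t"
  proof (rule ccontr)
    assume "\<not> 0 < t"
    with t have "t = 0" by simp
    with u init show False by fastforce
  qed
  have all_ge: "w t \<le> g t" if "g \<in> F" for g
  proof (rule continuous_on_le_at_right_end[where a = 0 and b = t and f = g and g = w])
    show "continuous_on {0..t} g" "continuous_on {0..t} w"
      using t by (auto intro: continuous_on_subset[OF cont[OF that]] continuous_on_subset[OF cw])
  qed (use \<open>0 < t\<close> before[OF that] in \<open>auto intro: less_imp_le\<close>)
  with u have "u t = w t" by (simp add: order_antisym)
  have "\<exists>u'. (u has_real_derivative u') (at t within {0..b}) \<and> w' t < u'"
    by (rule sub[of u t]) (use u \<open>0 < t\<close> t(2) all_ge \<open>u t = w t\<close> in auto)
  then obtain u' where du: "(u has_real_derivative u') (at t within {0..b})" and "w' t < u'"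
    by blast
  have "w t < u t"
  proof (rule DERIV_less_from_left[OF du dw \<open>w' t < u'\<close> \<open>0 < t\<close>])
    show "t \<in> {0..b}" "{0..<t} \<subseteq> {0..b}" using t by auto
    show "w r \<le> u r" if "0 \<le> r" "r < t" for r
      using before[OF u(1) that] by simp
  qed
  with \<open>u t = w t\<close> show False by simp
qed

lemma reciprocal_barrier_has_derivative:
  fixes a k s :: real
  assumes "k * s < a"
  shows "((\<lambda>r. 1 / (a - k * r)) has_real_derivative k * (1 / (a - k * s))\<^sup>2) (at s within S)"
  using assms
  by (auto intro!: derivative_eq_intros simp: power2_eq_square field_simps)

lemma vector_field_ge_of_lower_bound:
  fixes n w x y z :: real
  assumes "1 \<le> n" "0 \<le> w" "w \<le> x" "w \<le> y" "w \<le> z"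
  shows "(n + 1) * w\<^sup>2 \<le> n * x\<^sup>2 + z\<^sup>2"
    and "(n + 1) * w\<^sup>2 \<le> (n + 1) * z\<^sup>2"
    and "(n + 1) * w\<^sup>2 \<le> (n + 1) / n * z * ((n - 1) * x + y)"
proof -
  have "w\<^sup>2 \<le> x\<^sup>2" "w\<^sup>2 \<le> z\<^sup>2" using assms by (auto intro: power_mono)
  then show "(n + 1) * w\<^sup>2 \<le> n * x\<^sup>2 + z\<^sup>2" "(n + 1) * w\<^sup>2 \<le> (n + 1) * z\<^sup>2"
    using assms(1) by (auto simp: algebra_simps intro: add_mono)
  have "(n - 1) * w \<le> (n - 1) * x"
    using assms by (intro mult_left_mono) auto
  then have "n * w \<le> (n - 1) * x + y"
    using \<open>w \<le> y\<close> by (simp add: algebra_simps)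
  then have "(n + 1) / n * w * (n * w) \<le> (n + 1) / n * z * ((n - 1) * x + y)"
    using assms by (intro mult_mono) auto
  then show "(n + 1) * w\<^sup>2 \<le> (n + 1) / n * z * ((n - 1) * x + y)"
    using assms(1) by (simp add: power2_eq_square)
qed

lemma time_dom_atLeastAtMost_subset: "t \<in> time_dom T \<Longrightarrow> {0..t} \<subseteq> time_dom T"
  by (auto simp: time_dom_def intro: le_less_trans[of "ereal _" "ereal t" T])

lemma is_solution_has_derivative:
  assumes "is_solution n x0 y0 z0 T x y z" "S \<subseteq> time_dom T" "t \<in> S"
  shows "(x has_real_derivative (real n * (x t)\<^sup>2 + (z t)\<^sup>2)) (at t within S)"
    and "(y has_real_derivative ((real n + 1) * (z t)\<^sup>2)) (at t within S)"
    and "(z has_real_derivative ((real n + 1) / real n * z t * ((real n - 1) * x t + y t)))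
           (at t within S)"
  using assms by (auto simp: is_solution_def intro: DERIV_subset)

lemma is_solution_continuous_on:
  assumes "is_solution n x0 y0 z0 T x y z" "S \<subseteq> time_dom T"
  shows "continuous_on S x" "continuous_on S y" "continuous_on S z"
  using is_solution_has_derivative[OF assms]
  by (auto simp: continuous_on_eq_continuous_within intro: DERIV_continuous)

lemma is_solution_above_barrier:
  fixes n :: nat and a k t :: real
  assumes sol: "is_solution n x0 y0 z0 T x y z" and "1 \<le> n"
    and init: "1 / a < x0" "1 / a < y0" "1 / a < z0"
    and "0 \<le> k" "k < real n + 1" and t: "t \<in> time_dom T" "k * t < a"
  shows "1 / (a - k * t) < x t \<and> 1 / (a - k * t) < y t \<and> 1 / (a - k * t) < z t"
proof -
  define w where "w s = 1 / (a - k * s)" for s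
  define w' where "w' s = k * (w s)\<^sup>2" for s
  have dom: "{0..t} \<subseteq> time_dom T" using t(1) by (rule time_dom_atLeastAtMost_subset)
  have den: "k * s < a" if "s \<in> {0..t}" for s
  proof -
    have "k * s \<le> k * t" using that \<open>0 \<le> k\<close> by (intro mult_left_mono) auto
    with t(2) show ?thesis by linarith
  qed
  have init_values: "x 0 = x0" "y 0 = y0" "z 0 = z0" using sol by (simp_all add: is_solution_def)
  have "w s < f s" if "f \<in> {x, y, z}" "s \<in> {0..t}" for f s
  proof (rule strict_subsolution_stays_below
      [where F = "{x, y, z}" and b = t and w = w and w' = w' and f = f and s = s])
    show "continuous_on {0..t} f" if "f \<in> {x, y, z}" for f
      using that is_solution_continuous_on[OF sol dom] by auto
    show "w 0 < f 0" if "f \<in> {x, y, z}" for f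
      using that init init_values by (auto simp: w_def)
    show "(w has_real_derivative w' s) (at s within {0..t})" if "s \<in> {0..t}" for s
      unfolding w'_def w_def using den[OF that] by (rule reciprocal_barrier_has_derivative)
    show "\<exists>f'. (f has_real_derivative f') (at s within {0..t}) \<and> w' s < f'"
      if "f \<in> {x, y, z}" "0 < s" "s \<le> t" and ge: "\<And>g. g \<in> {x, y, z} \<Longrightarrow> w s \<le> g s"
        and "f s = w s" for f s
    proof -
      have "0 < w s" using den[of s] that by (simp add: w_def)
      then have "w' s < (real n + 1) * (w s)\<^sup>2" using \<open>k < real n + 1\<close> by (simp add: w'_def)
      moreover have "(real n + 1) * (w s)\<^sup>2 \<le> real n * (x s)\<^sup>2 + (z s)\<^sup>2"
        "(real n + 1) * (w s)\<^sup>2 \<le> (real n + 1) * (z s)\<^sup>2"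
        "(real n + 1) * (w s)\<^sup>2 \<le> (real n + 1) / real n * z s * ((real n - 1) * x s + y s)"
        using vector_field_ge_of_lower_bound[of "real n" "w s" "x s" "y s" "z s"]
          \<open>1 \<le> n\<close> \<open>0 < w s\<close> ge[of x] ge[of y] ge[of z]
        by simp_all
      moreover have "s \<in> {0..t}" using that by simp
      ultimately show ?thesis
        using \<open>f \<in> {x, y, z}\<close> is_solution_has_derivative[OF sol dom, of s]
        by (elim insertE emptyE) (blast intro: less_le_trans)+
    qed
  qed (use that in simp_all)
  moreover have "t \<in> {0..t}" using t(1) by (simp add: time_dom_def)
  ultimately show ?thesis by (simp add: w_def)
qed

lemma is_solution_lower_bound:
  fixes n :: nat and c t :: real
  assumes sol: "is_solution n x0 y0 z0 T x y z" and "1 \<le> n" and "0 < c"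
    and init: "1 / c \<le> x0" "1 / c \<le> y0" "1 / c \<le> z0"
    and t: "t \<in> time_dom T" "(real n + 1) * t < c"
  shows "1 / (c - (real n + 1) * t) \<le> x t \<and> 1 / (c - (real n + 1) * t) \<le> y t \<and>
         1 / (c - (real n + 1) * t) \<le> z t"
proof -
  define L where "L = real n + 1"
  \<comment> \<open>Perturbing the barrier makes the comparison strict both at time \<open>0\<close> and in the
    derivative; the bound itself follows in the limit \<open>e \<rightarrow> 0\<close>.\<close>
  define w where "w e = 1 / ((c + e) - (L - e) * t)" for e
  have "0 \<le> t" using t(1) by (simp add: time_dom_def)
  have strict: "w e < x t \<and> w e < y t \<and> w e < z t" if "e \<in> {0<..<L}" for e
  proof -
    have "1 / (c + e) < 1 / c" using that \<open>0 < c\<close> by (simp add: frac_less2)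
    moreover have "(L - e) * t < c + e"
      using that \<open>0 \<le> t\<close> t(2) mult_right_mono[of "L - e" L t] by (simp add: L_def)
    ultimately show ?thesis
      using is_solution_above_barrier[OF sol \<open>1 \<le> n\<close>, of "c + e" "L - e" t] that init t(1)
      by (simp add: w_def L_def)
  qed
  have "((\<lambda>e. (c + e) - (L - e) * t) \<longlongrightarrow> (c + 0) - (L - 0) * t) (at_right 0)"
    by (intro tendsto_intros)
  then have lim: "(w \<longlongrightarrow> 1 / (c - L * t)) (at_right 0)"
    unfolding w_def using t(2) by (intro tendsto_divide tendsto_const) (simp_all add: L_def)
  have "0 < L" by (simp add: L_def)
  have ev: "\<forall>\<^sub>F e in at_right 0. w e < x t \<and> w e < y t \<and> w e < z t"
    using eventually_at_right_real[OF \<open>0 < L\<close>] by (rule eventually_mono) (rule strict)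
  have "1 / (c - L * t) \<le> x t" "1 / (c - L * t) \<le> y t" "1 / (c - L * t) \<le> z t"
    by (rule tendsto_upperbound[OF lim eventually_mono[OF ev]]; simp)+
  then show ?thesis by (simp add: L_def)
qed

lemma not_continuous_on_if_ge_reciprocal_blowup:
  fixes f :: "real \<Rightarrow> real" and c L :: real
  assumes "0 < c" "0 < L"
    and ge: "\<And>t. 0 \<le> t \<Longrightarrow> L * t < c \<Longrightarrow> 1 / (c - L * t) \<le> f t"
  shows "\<not> continuous_on {0..c / L} f"
proof
  assume "continuous_on {0..c / L} f"
  then obtain M where M: "\<And>t. t \<in> {0..c / L} \<Longrightarrow> f t \<le> M"
    using continuous_attains_sup[of "{0..c / L}" f] assms(1,2) by fastforce
  define d where "d = c / (1 + c * \<bar>M\<bar>)"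
  have "0 < d" "d \<le> c" using \<open>0 < c\<close>
    by (auto simp: d_def field_simps add_pos_nonneg)
  have inv_d: "1 / d = 1 / c + \<bar>M\<bar>"
    using \<open>0 < c\<close> by (simp add: d_def field_simps add_pos_nonneg)
  define t where "t = (c - d) / L"
  have "0 \<le> t" "t \<le> c / L" "L * t < c" "c - L * t = d"
    using \<open>0 < d\<close> \<open>d \<le> c\<close> \<open>0 < L\<close> by (auto simp: t_def divide_right_mono)
  then have "1 / c + \<bar>M\<bar> \<le> M"
    using ge[of t] M[of t] inv_d by auto
  with \<open>0 < c\<close> show False by (smt (verit) divide_pos_pos)
qed

lemma is_solution_existence_time_le:
  fixes n :: nat and c :: real
  assumes sol: "is_solution n x0 y0 z0 T x y z" and "1 \<le> n" and "0 < c"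
    and init: "1 / c \<le> x0" "1 / c \<le> y0" "1 / c \<le> z0"
  shows "T \<le> ereal (c / (real n + 1))"
proof (rule ccontr)
  define L where "L = real n + 1"
  have "0 < L" by (simp add: L_def)
  assume "\<not> T \<le> ereal (c / (real n + 1))"
  then have dom: "{0..c / L} \<subseteq> time_dom T"
    using \<open>0 < c\<close> \<open>0 < L\<close>
    by (intro time_dom_atLeastAtMost_subset) (simp add: time_dom_def L_def)
  then have "continuous_on {0..c / L} x"
    by (rule is_solution_continuous_on(1)[OF sol])
  moreover have "1 / (c - L * t) \<le> x t" if "0 \<le> t" "L * t < c" for t
  proof -
    have "t \<in> time_dom T"
      using that \<open>0 < L\<close> dom by (auto simp: pos_le_divide_eq mult.commute)
    then show ?thesis
      using is_solution_lower_bound[OF sol \<open>1 \<le> n\<close> \<open>0 < c\<close> init] that(2)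
      by (simp add: L_def)
  qed
  ultimately show False
    using not_continuous_on_if_ge_reciprocal_blowup[OF \<open>0 < c\<close> \<open>0 < L\<close>] by blast
qed

lemma time_dom_less: "t \<in> time_dom T \<Longrightarrow> T \<le> ereal b \<Longrightarrow> t < b"
  unfolding time_dom_def using less_le_trans[of "ereal t" T "ereal b"] by simp

theorem proposition3p3:
  fixes n :: nat and x0 y0 z0 :: real and T :: ereal and x y z :: "real \<Rightarrow> real"
  assumes "n \<ge> 2"
    and "x0 > 0" and "y0 > 0" and "z0 > 0"
    and "is_maximal_solution n x0 y0 z0 T x y z"
  shows "T \<le> ereal (1 / ((real n + 1) * min x0 (min y0 z0))) \<and> T < \<infinity> \<and>
         (\<forall>t \<in> time_dom T.
            x t \<ge> 1 / (1 / min x0 (min y0 z0) - (real n + 1) * t) \<and>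
            y t \<ge> 1 / (1 / min x0 (min y0 z0) - (real n + 1) * t) \<and>
            z t \<ge> 1 / (1 / min x0 (min y0 z0) - (real n + 1) * t))"
proof -
  define c where "c = 1 / min x0 (min y0 z0)"
  have sol: "is_solution n x0 y0 z0 T x y z"
    using assms(5) by (simp add: is_maximal_solution_def)
  have "1 \<le> n" "0 < c" using assms(1-4) by (simp_all add: c_def)
  have init: "1 / c \<le> x0" "1 / c \<le> y0" "1 / c \<le> z0" by (simp_all add: c_def)
  have T_le: "T \<le> ereal (c / (real n + 1))"
    using is_solution_existence_time_le[OF sol \<open>1 \<le> n\<close> \<open>0 < c\<close> init] .
  have "c / (real n + 1) = 1 / ((real n + 1) * min x0 (min y0 z0))"
    by (simp add: c_def divide_divide_eq_left')
  with T_le have T_bound: "T \<le> ereal (1 / ((real n + 1) * min x0 (min y0 z0)))" by simp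
  then have "T < \<infinity>" by (cases T) auto
  moreover have "1 / (c - (real n + 1) * t) \<le> x t \<and> 1 / (c - (real n + 1) * t) \<le> y t \<and>
      1 / (c - (real n + 1) * t) \<le> z t" if "t \<in> time_dom T" for t
    using is_solution_lower_bound[OF sol \<open>1 \<le> n\<close> \<open>0 < c\<close> init that] time_dom_less[OF that T_le]
    by (simp add: pos_less_divide_eq mult.commute)
  ultimately show ?thesis
    using T_bound unfolding c_def by blast
qed

end
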